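(* Let $(\mathcal{X},\|\cdot\|)$ be a real Banach space, $\mathcal{E}$ a measurable space, $Q,P_e:\mathcal{X}\to\mathcal{X}$ with $\|Q(\theta_1)-Q(\theta_2)\|\le\rho\|\theta_1-\theta_2\|$ ($\rho\in[0,1)$, $\theta^\star$ the unique fixed point of $Q$) and $\|P_e(\theta_1)-P_e(\theta_2)\|\le L\|\theta_1-\theta_2\|$ for all $e$ ($L\ge0$). Let $P(\cdot\mid\theta)$ be a probability kernel from $\mathcal{X}$ to $\mathcal{E}$, $\theta_0\in\mathcal{X}$, and let $e_t$ be drawn from $P(\cdot\mid\theta_t)$ independently of $\mathcal{F}_t:=\sigma(e_0,\dots,e_{t-1})$ given $\theta_t$, with $\theta_{t+1}=Q(P_{e_t}(\theta_t))$. Let $W_e:=\|P_e(\theta^\star)-\theta^\star\|$ and assume there are $0\le\sigma\le M$ with $\int W_e\,P(de\mid\theta)\le\sigma$ and $\operatorname{ess\,sup}_{e\sim P(\cdot\mid\theta)}W_e\le M$ for every $\theta\in\mathcal{X}$. Let $\gamma:=\rho L$ and $u_t:=\mathbb{E}\|\theta_t-\theta^\star\|$. Then: (i) if $\gamma<1$, $u_t\le\gamma^tu_0+\rho\sigma\frac{1-\gamma^t}{1-\gamma}$; (ii) $\mathbb{E}[\Omega(\theta_t;e_t)]\le2\gamma u_t+(1+\rho)\sigma$; (iii) if $\sigma=0$ and $\gamma<1$, then almost surely $\|\theta_t-\theta^\star\|\le\gamma^t\|\theta_0-\theta^\star\|$ and $\Omega(\theta_t;e_t)\le2\gamma^{t+1}\|\theta_0-\theta^\star\|$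 for all $t$.
   Context: The order-gap is $\Omega(\theta;e):=\|Q(P_e(\theta))-P_e(Q(\theta))\|$. *)

theory Defs
  imports "HOL-Probability.Probability"
begin

primrec traj :: "('x \<Rightarrow> 'x) \<Rightarrow> ('e \<Rightarrow> 'x \<Rightarrow> 'x) \<Rightarrow> 'x \<Rightarrow> (nat \<Rightarrow> 'w \<Rightarrow> 'e) \<Rightarrow> nat \<Rightarrow> 'w \<Rightarrow> 'x"
  where
    "traj Q P \<theta>0 e 0 \<omega> = \<theta>0"
  | "traj Q P \<theta>0 e (Suc t) \<omega> = Q (P (e t \<omega>) (traj Q P \<theta>0 e t \<omega>))"

definition order_gap :: "('x::real_normed_vector \<Rightarrow> 'x) \<Rightarrow> ('e \<Rightarrow> 'x \<Rightarrow> 'x) \<Rightarrow> 'x \<Rightarrow> 'e \<Rightarrow> real"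
  where "order_gap Q P \<theta> e' = norm (Q (P e' \<theta>) - P e' (Q \<theta>))"

definition nat_filt :: "'w measure \<Rightarrow> 'e measure \<Rightarrow> (nat \<Rightarrow> 'w \<Rightarrow> 'e) \<Rightarrow> nat \<Rightarrow> 'w set set"
  where "nat_filt M E e t =
     sigma_sets (space M) (\<Union>i<t. {e i -` A \<inter> space M | A. A \<in> sets E})"

end

theory Submission
  imports Defs
begin

text \<open>Write \<open>\<gamma> = \<rho> L\<close> and \<open>W\<^sub>e = \<parallel>P\<^sub>e \<theta>\<^sup>\<star> - \<theta>\<^sup>\<star>\<parallel>\<close>. Because \<open>Q\<close> fixes \<open>\<theta>\<^sup>\<star>\<close>, one step
  of the iteration satisfies \<open>\<parallel>\<theta>\<^sub>t\<^sub>+\<^sub>1 - \<theta>\<^sup>\<star>\<parallel> \<le> \<gamma> \<parallel>\<theta>\<^sub>t - \<theta>\<^sup>\<star>\<parallel> + \<rho> W\<^sub>e\<^sub>t\<close>, and the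
  triangle inequality through \<open>\<theta>\<^sup>\<star>\<close> gives \<open>\<Omega>(\<theta>; e) \<le> 2 \<gamma> \<parallel>\<theta> - \<theta>\<^sup>\<star>\<parallel> + (1 + \<rho>) W\<^sub>e\<close>.
  The law of \<open>e\<^sub>t\<close> is the mixture of the kernels \<open>P(\<cdot> | \<theta>\<^sub>t)\<close>, so \<open>E W\<^sub>e\<^sub>t \<le> \<sigma>\<close>;
  taking expectations and unrolling the linear recursion gives (i) and (ii). If \<open>\<sigma> = 0\<close>, then
  almost surely \<open>W\<^sub>e\<^sub>t = 0\<close> for all \<open>t\<close> at once, and the same recursion holds pathwise with no
  noise term, giving (iii).\<close>

lemma lipschitz_displacement_le:
  fixes p :: "'x::real_normed_vector \<Rightarrow> 'x"
  assumes "\<And>y z. norm (p y - p z) \<le> L * norm (y - z)"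
  shows "norm (p x - s) \<le> L * norm (x - s) + norm (p s - s)"
proof -
  have "norm (p x - s) \<le> norm (p x - p s) + norm (p s - s)"
    using norm_triangle_ineq[of "p x - p s" "p s - s"] by simp
  with assms[of x s] show ?thesis by linarith
qed

lemma contraction_after_lipschitz_le:
  fixes Q p :: "'x::real_normed_vector \<Rightarrow> 'x"
  assumes Q_contr: "\<And>y z. norm (Q y - Q z) \<le> \<rho> * norm (y - z)" and "Q s = s" and "0 \<le> \<rho>"
    and p_lip: "\<And>y z. norm (p y - p z) \<le> L * norm (y - z)"
  shows "norm (Q (p x) - s) \<le> \<rho> * L * norm (x - s) + \<rho> * norm (p s - s)"
proof -
  have "norm (Q (p x) - s) \<le> \<rho> * norm (p x - s)"
    using Q_contr[of "p x" s] \<open>Q s = s\<close> by simp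
  also have "\<dots> \<le> \<rho> * (L * norm (x - s) + norm (p s - s))"
    using lipschitz_displacement_le[OF p_lip] \<open>0 \<le> \<rho>\<close> by (rule mult_left_mono)
  finally show ?thesis by (simp add: algebra_simps)
qed

lemma order_gap_le:
  fixes Q :: "'x::real_normed_vector \<Rightarrow> 'x"
  assumes Q_contr: "\<And>y z. norm (Q y - Q z) \<le> \<rho> * norm (y - z)" and "Q s = s" and "0 \<le> \<rho>"
    and "0 \<le> L" and P_lip: "\<And>y z. norm (P a y - P a z) \<le> L * norm (y - z)"
  shows "order_gap Q P x a \<le> 2 * (\<rho> * L) * norm (x - s) + (1 + \<rho>) * norm (P a s - s)"
proof -
  have QP: "norm (Q (P a x) - s) \<le> \<rho> * L * norm (x - s) + \<rho> * norm (P a s - s)"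
    using contraction_after_lipschitz_le[OF Q_contr \<open>Q s = s\<close> \<open>0 \<le> \<rho>\<close> P_lip] .
  have "L * norm (Q x - s) \<le> L * (\<rho> * norm (x - s))"
    using Q_contr[of x s] \<open>Q s = s\<close> \<open>0 \<le> L\<close> by (simp add: mult_left_mono)
  then have PQ: "norm (P a (Q x) - s) \<le> \<rho> * L * norm (x - s) + norm (P a s - s)"
    using lipschitz_displacement_le[OF P_lip, of "Q x" s] by (simp add: algebra_simps)
  have "order_gap Q P x a = norm ((Q (P a x) - s) - (P a (Q x) - s))"
    by (simp add: order_gap_def)
  also have "\<dots> \<le> norm (Q (P a x) - s) + norm (P a (Q x) - s)"
    by (rule norm_triangle_ineq4)
  finally show ?thesis using QP PQ by (simp add: algebra_simps)
qed

lemma linear_recurrence_le: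
  fixes u :: "nat \<Rightarrow> real"
  assumes "0 \<le> g" "g < 1" and step: "\<And>t. u (Suc t) \<le> g * u t + c"
  shows "u t \<le> g ^ t * u 0 + c * (1 - g ^ t) / (1 - g)"
proof (induction t)
  case (Suc t)
  have "u (Suc t) \<le> g * u t + c" by (rule step)
  also have "\<dots> \<le> g * (g ^ t * u 0 + c * (1 - g ^ t) / (1 - g)) + c"
    using Suc \<open>0 \<le> g\<close> by (simp add: mult_left_mono)
  also have "\<dots> = g ^ Suc t * u 0 + c * (1 - g ^ Suc t) / (1 - g)"
    using \<open>g < 1\<close> by (simp add: field_simps)
  finally show ?case .
qed simp

lemma integrable_if_esssup_le:
  fixes f :: "'a \<Rightarrow> real"
  assumes "finite_measure N" "f \<in> borel_measurable N" "\<And>x. 0 \<le> f x"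
    and "esssup N (\<lambda>x. ereal (f x)) \<le> ereal B"
  shows "integrable N f"
proof -
  have "AE x in N. ereal (f x) \<le> ereal B"
    using esssup_AE[of "\<lambda>x. ereal (f x)" N] by eventually_elim (rule order_trans[OF _ assms(4)])
  then have "AE x in N. norm (f x) \<le> B"
    using assms(3) by (auto elim: eventually_mono)
  then show ?thesis
    using finite_measure.integrable_const_bound[OF assms(1)] assms(2) by blast
qed

lemma distr_eq_bind_if_measure_eq:
  assumes "prob_space M" and f: "f \<in> M \<rightarrow>\<^sub>M E" and \<kappa>: "\<kappa> \<in> M \<rightarrow>\<^sub>M prob_algebra E"
    and law: "\<And>A. A \<in> sets E \<Longrightarrow> measure M (f -` A \<inter> space M) = (\<integral>\<omega>. measure (\<kappa> \<omega>) A \<partial>M)"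
  shows "distr M E f = M \<bind> \<kappa>"
proof (rule measure_eqI)
  interpret prob_space M by fact
  have \<kappa>_prob: "prob_space (\<kappa> \<omega>)" "sets (\<kappa> \<omega>) = sets E" if "\<omega> \<in> space M" for \<omega>
    using measurable_space[OF \<kappa> that] by (auto simp: space_prob_algebra)
  have \<kappa>_sub: "\<kappa> \<in> M \<rightarrow>\<^sub>M subprob_algebra E"
    using \<kappa> by (rule measurable_prob_algebraD)
  show "sets (distr M E f) = sets (M \<bind> \<kappa>)"
    using \<kappa>_prob not_empty by (subst sets_bind) auto
  fix A assume "A \<in> sets (distr M E f)"
  then have A: "A \<in> sets E" by simp
  have "integrable M (\<lambda>\<omega>. measure (\<kappa> \<omega>) A)"
    by (rule integrable_const_bound[where B=1])
      (use \<kappa>_prob A \<kappa> in \<open>auto intro: prob_space.prob_le_1\<close>)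
  then have "ennreal (\<integral>\<omega>. measure (\<kappa> \<omega>) A \<partial>M) = (\<integral>\<^sup>+\<omega>. ennreal (measure (\<kappa> \<omega>) A) \<partial>M)"
    by (rule nn_integral_eq_integral[symmetric]) simp
  also have "\<dots> = (\<integral>\<^sup>+\<omega>. emeasure (\<kappa> \<omega>) A \<partial>M)"
    using \<kappa>_prob by (intro nn_integral_cong) (simp add: prob_space_def finite_measure.emeasure_eq_measure)
  finally show "emeasure (distr M E f) A = emeasure (M \<bind> \<kappa>) A"
    using f A law[OF A] \<kappa>_sub
    by (simp add: emeasure_distr emeasure_eq_measure emeasure_bind[OF not_empty])
qed

locale noisy_contraction_iteration = prob_space M
  for M :: "'w measure" +
  fixes Q :: "'x::real_normed_vector \<Rightarrow> 'x"
    and P :: "'e \<Rightarrow> 'x \<Rightarrow> 'x"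
    and E :: "'e measure"
    and K :: "'x \<Rightarrow> 'e measure"
    and e :: "nat \<Rightarrow> 'w \<Rightarrow> 'e"
    and \<rho> L \<sigma> Mb :: real
    and \<theta>0 \<theta>s :: 'x
  assumes rho_nonneg: "0 \<le> \<rho>"
    and Q_contr: "\<And>x y. norm (Q x - Q y) \<le> \<rho> * norm (x - y)"
    and Q_fixed: "Q \<theta>s = \<theta>s"
    and L_nonneg: "0 \<le> L"
    and P_lip: "\<And>a x y. norm (P a x - P a y) \<le> L * norm (x - y)"
    and P_meas: "(\<lambda>(a, x). P a x) \<in> E \<Otimes>\<^sub>M borel \<rightarrow>\<^sub>M borel"
    and K_kernel: "K \<in> borel \<rightarrow>\<^sub>M prob_algebra E"
    and e_meas: "\<And>t. e t \<in> M \<rightarrow>\<^sub>M E"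
    and e_law: "\<And>t A. A \<in> sets E \<Longrightarrow>
      measure M (e t -` A \<inter> space M) = (\<integral>\<omega>. measure (K (traj Q P \<theta>0 e t \<omega>)) A \<partial>M)"
    and W_mean: "\<And>\<theta>. (\<integral>a. norm (P a \<theta>s - \<theta>s) \<partial>K \<theta>) \<le> \<sigma>"
    and W_sup: "\<And>\<theta>. esssup (K \<theta>) (\<lambda>a. ereal (norm (P a \<theta>s - \<theta>s))) \<le> ereal Mb"
begin

abbreviation \<theta> :: "nat \<Rightarrow> 'w \<Rightarrow> 'x" where "\<theta> \<equiv> traj Q P \<theta>0 e"

abbreviation W :: "'e \<Rightarrow> real" where "W a \<equiv> norm (P a \<theta>s - \<theta>s)"

lemma P_comp_measurable:
  "f \<in> N \<rightarrow>\<^sub>M E \<Longrightarrow> g \<in> borel_measurable N \<Longrightarrow> (\<lambda>\<omega>. P (f \<omega>) (g \<omega>)) \<in> borel_measurable N"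
  using measurable_compose[OF measurable_Pair P_meas] by simp

lemma Q_measurable: "Q \<in> borel_measurable borel"
proof -
  have "\<rho>-lipschitz_on UNIV Q"
    unfolding lipschitz_on_def dist_norm using rho_nonneg Q_contr by auto
  then show ?thesis
    by (intro borel_measurable_continuous_onI lipschitz_on_continuous_on)
qed

lemma traj_measurable: "\<theta> t \<in> borel_measurable M"
proof (induction t)
  case (Suc t)
  show ?case
    using measurable_compose[OF P_comp_measurable[OF e_meas Suc] Q_measurable] by simp
qed simp

lemma displacement_measurable: "(\<lambda>x. norm (x - \<theta>s)) \<in> borel_measurable borel"
  by (intro borel_measurable_continuous_onI continuous_intros)

lemma W_measurable: "W \<in> borel_measurable E"
  using measurable_compose[OF P_comp_measurable[of "\<lambda>a. a" E "\<lambda>_. \<theta>s"] displacement_measurable]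
  by simp

lemma kernel_prob_space: "prob_space (K x)" "sets (K x) = sets E"
  using measurable_space[OF K_kernel, of x] by (auto simp: space_prob_algebra)

lemma W_integrable: "integrable (K x) W"
proof (rule integrable_if_esssup_le[OF _ _ _ W_sup])
  show "finite_measure (K x)"
    using kernel_prob_space by (simp add: prob_space_def)
  show "W \<in> borel_measurable (K x)"
    using W_measurable measurable_cong_sets[OF kernel_prob_space(2) refl] by blast
qed simp

lemma sigma_nonneg: "0 \<le> \<sigma>"
  by (rule order_trans[OF _ W_mean[of \<theta>0]]) simp

lemma distr_e_eq_bind: "distr M E (e t) = M \<bind> (\<lambda>\<omega>. K (\<theta> t \<omega>))"
  using prob_space_axioms e_meas measurable_compose[OF traj_measurable K_kernel] e_law
  by (rule distr_eq_bind_if_measure_eq)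

lemma noise_nn_integral_le: "(\<integral>\<^sup>+\<omega>. W (e t \<omega>) \<partial>M) \<le> ennreal \<sigma>"
proof -
  have W_ennreal: "(\<lambda>a. ennreal (W a)) \<in> borel_measurable E"
    using W_measurable by measurable
  have "(\<integral>\<^sup>+\<omega>. W (e t \<omega>) \<partial>M) = (\<integral>\<^sup>+a. W a \<partial>distr M E (e t))"
    using W_ennreal by (intro nn_integral_distr[OF e_meas, symmetric]) simp
  also have "\<dots> = (\<integral>\<^sup>+\<omega>. (\<integral>\<^sup>+a. W a \<partial>K (\<theta> t \<omega>)) \<partial>M)"
    unfolding distr_e_eq_bind
    using W_ennreal measurable_prob_algebraD[OF measurable_compose[OF traj_measurable K_kernel]]
    by (rule nn_integral_bind)
  also have "\<dots> \<le> (\<integral>\<^sup>+\<omega>. ennreal \<sigma> \<partial>M)"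
  proof (intro nn_integral_mono)
    fix \<omega>
    show "(\<integral>\<^sup>+a. W a \<partial>K (\<theta> t \<omega>)) \<le> ennreal \<sigma>"
      using nn_integral_eq_integral[OF W_integrable] W_mean ennreal_leI by simp
  qed
  finally show ?thesis by (simp add: emeasure_space_1)
qed

lemma noise_measurable: "(\<lambda>\<omega>. W (e t \<omega>)) \<in> borel_measurable M"
  using measurable_compose[OF e_meas W_measurable] .

lemma noise_integrable: "integrable M (\<lambda>\<omega>. W (e t \<omega>))"
proof (rule integrableI_bounded[OF noise_measurable])
  show "(\<integral>\<^sup>+\<omega>. norm (W (e t \<omega>)) \<partial>M) < \<infinity>"
    using noise_nn_integral_le[of t] by (simp add: le_less_trans)
qed

lemma noise_integral_le: "(\<integral>\<omega>. W (e t \<omega>) \<partial>M) \<le> \<sigma>"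
proof -
  have "ennreal (\<integral>\<omega>. W (e t \<omega>) \<partial>M) = (\<integral>\<^sup>+\<omega>. W (e t \<omega>) \<partial>M)"
    by (rule nn_integral_eq_integral[OF noise_integrable, symmetric]) simp
  also have "\<dots> \<le> ennreal \<sigma>"
    by (rule noise_nn_integral_le)
  finally show ?thesis
    using sigma_nonneg by (simp add: ennreal_le_iff)
qed

lemma error_step_le: "norm (\<theta> (Suc t) \<omega> - \<theta>s) \<le> \<rho> * L * norm (\<theta> t \<omega> - \<theta>s) + \<rho> * W (e t \<omega>)"
  using contraction_after_lipschitz_le[OF Q_contr Q_fixed rho_nonneg P_lip] by simp

lemma order_gap_traj_le:
  "order_gap Q P (\<theta> t \<omega>) (e t \<omega>) \<le> 2 * (\<rho> * L) * norm (\<theta> t \<omega> - \<theta>s) + (1 + \<rho>) * W (e t \<omega>)"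
  using order_gap_le[OF Q_contr Q_fixed rho_nonneg L_nonneg P_lip] .

lemma error_measurable: "(\<lambda>\<omega>. norm (\<theta> t \<omega> - \<theta>s)) \<in> borel_measurable M"
  using measurable_compose[OF traj_measurable displacement_measurable] .

lemma error_integrable: "integrable M (\<lambda>\<omega>. norm (\<theta> t \<omega> - \<theta>s))"
proof (induction t)
  case (Suc t)
  have "integrable M (\<lambda>\<omega>. \<rho> * L * norm (\<theta> t \<omega> - \<theta>s) + \<rho> * W (e t \<omega>))"
    using Suc noise_integrable by simp
  then show ?case
  proof (rule Bochner_Integration.integrable_bound[OF _ error_measurable], intro always_eventually allI)
    fix \<omega>
    have "0 \<le> \<rho> * L * norm (\<theta> t \<omega> - \<theta>s) + \<rho> * W (e t \<omega>)"
      using rho_nonneg L_nonneg by simp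
    then show "norm (norm (\<theta> (Suc t) \<omega> - \<theta>s))
        \<le> norm (\<rho> * L * norm (\<theta> t \<omega> - \<theta>s) + \<rho> * W (e t \<omega>))"
      using error_step_le[of t \<omega>] by (simp del: traj.simps)
  qed
qed simp

lemma mean_error_step_le:
  "(\<integral>\<omega>. norm (\<theta> (Suc t) \<omega> - \<theta>s) \<partial>M) \<le> \<rho> * L * (\<integral>\<omega>. norm (\<theta> t \<omega> - \<theta>s) \<partial>M) + \<rho> * \<sigma>"
proof -
  have "(\<integral>\<omega>. norm (\<theta> (Suc t) \<omega> - \<theta>s) \<partial>M)
      \<le> (\<integral>\<omega>. \<rho> * L * norm (\<theta> t \<omega> - \<theta>s) + \<rho> * W (e t \<omega>) \<partial>M)"
    using noise_integrable[of t] error_integrable[of t]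
    by (intro integral_mono error_integrable error_step_le) auto
  also have "\<dots> = \<rho> * L * (\<integral>\<omega>. norm (\<theta> t \<omega> - \<theta>s) \<partial>M) + \<rho> * (\<integral>\<omega>. W (e t \<omega>) \<partial>M)"
    using error_integrable noise_integrable by simp
  also have "\<dots> \<le> \<rho> * L * (\<integral>\<omega>. norm (\<theta> t \<omega> - \<theta>s) \<partial>M) + \<rho> * \<sigma>"
    using noise_integral_le rho_nonneg by (simp add: mult_left_mono)
  finally show ?thesis .
qed

lemma mean_error_le:
  assumes "\<rho> * L < 1"
  shows "(\<integral>\<omega>. norm (\<theta> t \<omega> - \<theta>s) \<partial>M)
    \<le> (\<rho> * L) ^ t * (\<integral>\<omega>. norm (\<theta> 0 \<omega> - \<theta>s) \<partial>M) + \<rho> * \<sigma> * (1 - (\<rho> * L) ^ t) / (1 - \<rho> * L)"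
  using rho_nonneg L_nonneg assms mean_error_step_le by (intro linear_recurrence_le) auto

text \<open>In a non-separable space the order gap need not be measurable; when it is not integrable,
  its integral is \<open>0\<close> by convention and the bound holds trivially.\<close>
lemma mean_order_gap_le:
  "(\<integral>\<omega>. order_gap Q P (\<theta> t \<omega>) (e t \<omega>) \<partial>M)
    \<le> 2 * (\<rho> * L) * (\<integral>\<omega>. norm (\<theta> t \<omega> - \<theta>s) \<partial>M) + (1 + \<rho>) * \<sigma>"
proof (cases "integrable M (\<lambda>\<omega>. order_gap Q P (\<theta> t \<omega>) (e t \<omega>))")
  case True
  have "(\<integral>\<omega>. order_gap Q P (\<theta> t \<omega>) (e t \<omega>) \<partial>M)
      \<le> (\<integral>\<omega>. 2 * (\<rho> * L) * norm (\<theta> t \<omega> - \<theta>s) + (1 + \<rho>) * W (e t \<omega>) \<partial>M)"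
    using True error_integrable[of t] noise_integrable[of t]
    by (intro integral_mono order_gap_traj_le) auto
  also have "\<dots> = 2 * (\<rho> * L) * (\<integral>\<omega>. norm (\<theta> t \<omega> - \<theta>s) \<partial>M) + (1 + \<rho>) * (\<integral>\<omega>. W (e t \<omega>) \<partial>M)"
    using error_integrable noise_integrable by simp
  also have "\<dots> \<le> 2 * (\<rho> * L) * (\<integral>\<omega>. norm (\<theta> t \<omega> - \<theta>s) \<partial>M) + (1 + \<rho>) * \<sigma>"
    using noise_integral_le rho_nonneg by (simp add: mult_left_mono)
  finally show ?thesis .
next
  case False
  then show ?thesis
    using rho_nonneg L_nonneg sigma_nonneg by (simp add: not_integrable_integral_eq)
qed

lemma noise_AE_zero:
  assumes "\<sigma> = 0"
  shows "AE \<omega> in M. \<forall>t. W (e t \<omega>) = 0"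
proof -
  have "AE \<omega> in M. W (e t \<omega>) = 0" for t
  proof -
    have "(\<integral>\<^sup>+\<omega>. W (e t \<omega>) \<partial>M) = 0"
      using noise_nn_integral_le[of t] assms by simp
    then have "AE \<omega> in M. ennreal (W (e t \<omega>)) = 0"
      using noise_measurable by (subst nn_integral_0_iff_AE[symmetric]) auto
    then show ?thesis by eventually_elim simp
  qed
  then show ?thesis by (simp add: AE_all_countable)
qed

lemma noiseless_error_le:
  assumes "\<rho> * L < 1" and noiseless: "\<forall>t. W (e t \<omega>) = 0"
  shows "norm (\<theta> t \<omega> - \<theta>s) \<le> (\<rho> * L) ^ t * norm (\<theta>0 - \<theta>s)"
  using linear_recurrence_le[of "\<rho> * L" "\<lambda>t. norm (\<theta> t \<omega> - \<theta>s)" 0 t]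
    rho_nonneg L_nonneg assms error_step_le[of _ \<omega>] by (simp del: traj.simps(2))

lemma noiseless_order_gap_le:
  assumes "\<rho> * L < 1" and noiseless: "\<forall>t. W (e t \<omega>) = 0"
  shows "order_gap Q P (\<theta> t \<omega>) (e t \<omega>) \<le> 2 * (\<rho> * L) ^ (t + 1) * norm (\<theta>0 - \<theta>s)"
proof -
  have "order_gap Q P (\<theta> t \<omega>) (e t \<omega>) \<le> 2 * (\<rho> * L) * norm (\<theta> t \<omega> - \<theta>s)"
    using order_gap_traj_le[of t \<omega>] noiseless by simp
  also have "\<dots> \<le> 2 * (\<rho> * L) * ((\<rho> * L) ^ t * norm (\<theta>0 - \<theta>s))"
    using noiseless_error_le[OF assms] rho_nonneg L_nonneg by (simp add: mult_left_mono)
  finally show ?thesis by (simp add: algebra_simps)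
qed

lemma noiseless_AE_bounds:
  assumes "\<sigma> = 0" and "\<rho> * L < 1"
  shows "AE \<omega> in M. \<forall>t. norm (\<theta> t \<omega> - \<theta>s) \<le> (\<rho> * L) ^ t * norm (\<theta>0 - \<theta>s)
    \<and> order_gap Q P (\<theta> t \<omega>) (e t \<omega>) \<le> 2 * (\<rho> * L) ^ (t + 1) * norm (\<theta>0 - \<theta>s)"
  using noise_AE_zero[OF assms(1)]
  by eventually_elim (use noiseless_error_le noiseless_order_gap_le assms(2) in blast)

end

theorem theorem4p22:
  fixes Q :: "'x::banach \<Rightarrow> 'x"
    and P :: "'e \<Rightarrow> 'x \<Rightarrow> 'x"
    and E :: "'e measure"
    and K :: "'x \<Rightarrow> 'e measure"
    and M :: "'w measure"
    and e :: "nat \<Rightarrow> 'w \<Rightarrow> 'e"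
    and \<rho> L \<sigma> Mb :: real
    and \<theta>0 \<theta>s :: 'x
  assumes rho: "0 \<le> \<rho>" "\<rho> < 1"
    and Q_contr: "\<And>x y. norm (Q x - Q y) \<le> \<rho> * norm (x - y)"
    and Q_fix: "\<And>x. Q x = x \<longleftrightarrow> x = \<theta>s"
    and L: "0 \<le> L"
    and P_lip: "\<And>a x y. norm (P a x - P a y) \<le> L * norm (x - y)"
    and P_meas: "(\<lambda>(a, x). P a x) \<in> E \<Otimes>\<^sub>M borel \<rightarrow>\<^sub>M borel"
    and K_kernel: "K \<in> borel \<rightarrow>\<^sub>M prob_algebra E"
    and M_prob: "prob_space M"
    and e_meas: "\<And>t. e t \<in> M \<rightarrow>\<^sub>M E"
    and e_cond: "\<And>t B A. B \<in> nat_filt M E e t \<Longrightarrow> A \<in> sets E \<Longrightarrow>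
        measure M (B \<inter> (e t -` A \<inter> space M))
          = (\<integral>\<omega>. indicator B \<omega> * measure (K (traj Q P \<theta>0 e t \<omega>)) A \<partial>M)"
    and sig: "0 \<le> \<sigma>" "\<sigma> \<le> Mb"
    and W_mean: "\<And>\<theta>. (\<integral>a. norm (P a \<theta>s - \<theta>s) \<partial>K \<theta>) \<le> \<sigma>"
    and W_sup: "\<And>\<theta>. esssup (K \<theta>) (\<lambda>a. ereal (norm (P a \<theta>s - \<theta>s))) \<le> ereal Mb"
  shows
    "(\<rho> * L < 1 \<longrightarrow>
        (\<forall>t. (\<integral>\<omega>. norm (traj Q P \<theta>0 e t \<omega> - \<theta>s) \<partial>M)
              \<le> (\<rho> * L) ^ t * (\<integral>\<omega>. norm (traj Q P \<theta>0 e 0 \<omega> - \<theta>s) \<partial>M)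
                + \<rho> * \<sigma> * (1 - (\<rho> * L) ^ t) / (1 - \<rho> * L)))
     \<and> (\<forall>t. (\<integral>\<omega>. order_gap Q P (traj Q P \<theta>0 e t \<omega>) (e t \<omega>) \<partial>M)
              \<le> 2 * (\<rho> * L) * (\<integral>\<omega>. norm (traj Q P \<theta>0 e t \<omega> - \<theta>s) \<partial>M)
                + (1 + \<rho>) * \<sigma>)
     \<and> (\<sigma> = 0 \<and> \<rho> * L < 1 \<longrightarrow>
        (AE \<omega> in M. \<forall>t.
            norm (traj Q P \<theta>0 e t \<omega> - \<theta>s) \<le> (\<rho> * L) ^ t * norm (\<theta>0 - \<theta>s)
          \<and> order_gap Q P (traj Q P \<theta>0 e t \<omega>) (e t \<omega>)
              \<le> 2 * (\<rho> * L) ^ (t + 1) * norm (\<theta>0 - \<theta>s)))"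
proof -
  \<comment> \<open>Only the marginal law of \<open>e t\<close>, the case \<open>B = space M\<close> of \<open>e_cond\<close>, is needed.\<close>
  have e_law: "measure M (e t -` A \<inter> space M) = (\<integral>\<omega>. measure (K (traj Q P \<theta>0 e t \<omega>)) A \<partial>M)"
    if "A \<in> sets E" for t A
  proof -
    have space: "space M \<in> nat_filt M E e t"
      unfolding nat_filt_def by (rule sigma_sets_top)
    have "measure M (e t -` A \<inter> space M) = measure M (space M \<inter> (e t -` A \<inter> space M))"
      by (simp add: Int_absorb1)
    also have "\<dots> = (\<integral>\<omega>. indicator (space M) \<omega> * measure (K (traj Q P \<theta>0 e t \<omega>)) A \<partial>M)"
      by (rule e_cond[OF space that])
    also have "\<dots> = (\<integral>\<omega>. measure (K (traj Q P \<theta>0 e t \<omega>)) A \<partial>M)"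
      by (rule Bochner_Integration.integral_cong) auto
    finally show ?thesis .
  qed
  have "noisy_contraction_iteration M Q P E K e \<rho> L \<sigma> Mb \<theta>0 \<theta>s"
    using Q_fix[of \<theta>s]
    by (intro noisy_contraction_iteration.intro noisy_contraction_iteration_axioms.intro
        M_prob rho(1) Q_contr L P_lip P_meas K_kernel e_meas e_law W_mean W_sup) simp_all
  then interpret noisy_contraction_iteration M Q P E K e \<rho> L \<sigma> Mb \<theta>0 \<theta>s .
  show ?thesis
    by (intro conjI impI allI mean_error_le mean_order_gap_le noiseless_AE_bounds) simp_all
qed

end
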